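(* Let $(W,\operatorname{supp}^W)$ be a PO-dilator and let $X$ be a partial order. Then every $\sigma\in W(X)$ has a unique normal form $\sigma=_{\mathrm{NF}}W(\iota_a)(\sigma_0)$, i.e. there are unique $a\in[X]^{<\omega}$ and $\sigma_0\in W(a)$ with $\sigma=W(\iota_a)(\sigma_0)$ and $\operatorname{supp}^W_a(\sigma_0)=a$. Moreover, for this normal form we have $a=\operatorname{supp}^W_X(\sigma)$.
   Context: A quasi embedding between partial orders $X,Y$ is a function $f:X\to Y$ such that $f(x)\leq_Y f(y)$ implies $x\leq_X y$; it is an embedding if the converse implication also holds. $\mathrm{PO}$ is the category of partial orders with quasi embeddings as morphisms. For a set $X$, $[X]^{<\omega}$ is the set of finite subsets of $X$, and for $f:X\to Y$ we put $[f]^{<\omega}(a)=\{f(x)\mid x\in a\}$. Subsets of partial orders are regarded as suborders; for $a\subseteq X$, $\iota_a:a\hookrightarrow X$ is the inclusion. A PO-dilator consists of a functor $W:\mathrm{PO}\to\mathrm{PO}$ such that $W(f)$ is an embedding whenever $f$ is an embedding, together with a natural transformation $\operatorname{supp}^W:W\Rightarrow[\cdot]^{<\omega}$ (functions $\operatorname{supp}^W_X:W(X)\to[X]^{<\omega}$ with $\operatorname{supp}^W_Y\circ W(f)=[f]^{<\omega}\circ\operatorname{supp}^W_X$ for all quasi embeddings $f:X\to Y$) satisfying the support condition: for every embedding $f:X\to Y$, $\operatorname{rng}(W(f))=\{\sigma\in W(Y)\mid \operatorname{supp}^W_Y(\sigma)\subseteq\operatorname{rng}(f)\}$. *)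

theory Defs
  imports Main
begin

text \<open>A partial order is represented by its (reflexive) order relation r;
its carrier is Field r.  Elements of all partial orders in the domain
category live in one ambient type 'u, those of the images in one type 'v.\<close>

definition is_po :: "'a rel \<Rightarrow> bool" where
  "is_po r \<longleftrightarrow> (\<forall>x\<in>Field r. (x, x) \<in> r) \<and> antisym r \<and> trans r"

definition restr :: "'a rel \<Rightarrow> 'a set \<Rightarrow> 'a rel" where
  "restr r a = r \<inter> (a \<times> a)"

definition quasi_emb :: "'a rel \<Rightarrow> 'b rel \<Rightarrow> ('a \<Rightarrow> 'b) \<Rightarrow> bool" where
  "quasi_emb r s f \<longleftrightarrow> f ` Field r \<subseteq> Field s \<and>
     (\<forall>x\<in>Field r. \<forall>y\<in>Field r. (f x, f y) \<in> s \<longrightarrow> (x, y) \<in> r)"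

definition emb :: "'a rel \<Rightarrow> 'b rel \<Rightarrow> ('a \<Rightarrow> 'b) \<Rightarrow> bool" where
  "emb r s f \<longleftrightarrow> f ` Field r \<subseteq> Field s \<and>
     (\<forall>x\<in>Field r. \<forall>y\<in>Field r. (f x, f y) \<in> s \<longleftrightarrow> (x, y) \<in> r)"

text \<open>A PO-dilator: object map Wo, morphism map Wm (taking domain, codomain and
the underlying function of a quasi embedding), and support transformation supp.\<close>
definition po_dilator ::
  "('u rel \<Rightarrow> 'v rel) \<Rightarrow> ('u rel \<Rightarrow> 'u rel \<Rightarrow> ('u \<Rightarrow> 'u) \<Rightarrow> 'v \<Rightarrow> 'v)
   \<Rightarrow> ('u rel \<Rightarrow> 'v \<Rightarrow> 'u set) \<Rightarrow> bool" where
  "po_dilator Wo Wm supp \<longleftrightarrow>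
     \<comment> \<open>W maps partial orders to partial orders\<close>
     (\<forall>X. is_po X \<longrightarrow> is_po (Wo X)) \<and>
     \<comment> \<open>W maps quasi embeddings to quasi embeddings\<close>
     (\<forall>X Y f. is_po X \<and> is_po Y \<and> quasi_emb X Y f \<longrightarrow> quasi_emb (Wo X) (Wo Y) (Wm X Y f)) \<and>
     \<comment> \<open>W f depends only on the morphism (f restricted to the carrier)\<close>
     (\<forall>X Y f g. is_po X \<and> is_po Y \<and> quasi_emb X Y f \<and> (\<forall>x\<in>Field X. f x = g x)
        \<longrightarrow> (\<forall>\<sigma>\<in>Field (Wo X). Wm X Y f \<sigma> = Wm X Y g \<sigma>)) \<and>
     \<comment> \<open>functoriality: identities\<close>
     (\<forall>X. is_po X \<longrightarrow> (\<forall>\<sigma>\<in>Field (Wo X). Wm X X id \<sigma> = \<sigma>)) \<and>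
     \<comment> \<open>functoriality: composition\<close>
     (\<forall>X Y Z f g. is_po X \<and> is_po Y \<and> is_po Z \<and> quasi_emb X Y f \<and> quasi_emb Y Z g
        \<longrightarrow> (\<forall>\<sigma>\<in>Field (Wo X). Wm X Z (g \<circ> f) \<sigma> = Wm Y Z g (Wm X Y f \<sigma>))) \<and>
     \<comment> \<open>embeddings are preserved\<close>
     (\<forall>X Y f. is_po X \<and> is_po Y \<and> emb X Y f \<longrightarrow> emb (Wo X) (Wo Y) (Wm X Y f)) \<and>
     \<comment> \<open>supp_X : W(X) \<rightarrow> [X]^<omega>\<close>
     (\<forall>X. is_po X \<longrightarrow> (\<forall>\<sigma>\<in>Field (Wo X). finite (supp X \<sigma>) \<and> supp X \<sigma> \<subseteq> Field X)) \<and>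
     \<comment> \<open>naturality of supp\<close>
     (\<forall>X Y f. is_po X \<and> is_po Y \<and> quasi_emb X Y f
        \<longrightarrow> (\<forall>\<sigma>\<in>Field (Wo X). supp Y (Wm X Y f \<sigma>) = f ` supp X \<sigma>)) \<and>
     \<comment> \<open>support condition\<close>
     (\<forall>X Y f. is_po X \<and> is_po Y \<and> emb X Y f
        \<longrightarrow> Wm X Y f ` Field (Wo X) = {\<sigma> \<in> Field (Wo Y). supp Y \<sigma> \<subseteq> f ` Field X})"

end

theory Submission
  imports Defs
begin

text \<open>Naturality of the support along the inclusion \<open>\<iota>\<^sub>a\<close> shows that any normal form
\<open>\<sigma> = W(\<iota>\<^sub>a)(\<sigma>\<^sub>0)\<close> has \<open>a = supp\<^sub>X(\<sigma>)\<close>. Conversely, with \<open>a = supp\<^sub>X(\<sigma>)\<close> the support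
condition puts \<sigma> into the range of \<open>W(\<iota>\<^sub>a)\<close>, and naturality again gives
\<open>supp\<^sub>a(\<sigma>\<^sub>0) = a\<close>. Uniqueness of \<open>\<sigma>\<^sub>0\<close> holds because \<open>W(\<iota>\<^sub>a)\<close> is an embedding of partial
orders, hence injective.\<close>

lemma Field_restr:
  assumes "is_po X" "a \<subseteq> Field X"
  shows "Field (restr X a) = a"
proof
  show "Field (restr X a) \<subseteq> a" unfolding restr_def Field_def by auto
  show "a \<subseteq> Field (restr X a)"
  proof
    fix x assume "x \<in> a"
    then have "(x, x) \<in> restr X a" using assms unfolding is_po_def restr_def by auto
    then show "x \<in> Field (restr X a)" by (auto simp: Field_def)
  qed
qed

lemma is_po_restr:
  assumes "is_po X" "a \<subseteq> Field X"
  shows "is_po (restr X a)"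
  using assms Field_restr[OF assms] unfolding is_po_def restr_def antisym_def trans_def
  by auto

lemma emb_restr_id:
  assumes "is_po X" "a \<subseteq> Field X"
  shows "emb (restr X a) X id"
  using assms Field_restr[OF assms] unfolding emb_def restr_def by auto

lemma emb_imp_quasi_emb: "emb r s f \<Longrightarrow> quasi_emb r s f"
  unfolding emb_def quasi_emb_def by auto

lemma emb_inj_on:
  assumes "is_po s" "antisym r" "emb r s f"
  shows "inj_on f (Field r)"
proof (rule inj_onI)
  fix x y assume x: "x \<in> Field r" and y: "y \<in> Field r" and eq: "f x = f y"
  have "f x \<in> Field s" using assms(3) x unfolding emb_def by auto
  then have "(f x, f x) \<in> s" using assms(1) unfolding is_po_def by auto
  then have "(f x, f y) \<in> s" "(f y, f x) \<in> s" using eq by auto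
  then have "(x, y) \<in> r" "(y, x) \<in> r" using assms(3) x y unfolding emb_def by auto
  then show "x = y" using assms(2) unfolding antisym_def by auto
qed

definition normal_form ::
  "('u rel \<Rightarrow> 'v rel) \<Rightarrow> ('u rel \<Rightarrow> 'u rel \<Rightarrow> ('u \<Rightarrow> 'u) \<Rightarrow> 'v \<Rightarrow> 'v)
   \<Rightarrow> ('u rel \<Rightarrow> 'v \<Rightarrow> 'u set) \<Rightarrow> 'u rel \<Rightarrow> 'v \<Rightarrow> 'u set \<Rightarrow> 'v \<Rightarrow> bool" where
  "normal_form Wo Wm supp X \<sigma> a \<sigma>0 \<longleftrightarrow>
     finite a \<and> a \<subseteq> Field X \<and> \<sigma>0 \<in> Field (Wo (restr X a)) \<and>
     \<sigma> = Wm (restr X a) X id \<sigma>0 \<and> supp (restr X a) \<sigma>0 = a"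

context
  fixes Wo :: "'u rel \<Rightarrow> 'v rel"
    and Wm :: "'u rel \<Rightarrow> 'u rel \<Rightarrow> ('u \<Rightarrow> 'u) \<Rightarrow> 'v \<Rightarrow> 'v"
    and supp :: "'u rel \<Rightarrow> 'v \<Rightarrow> 'u set"
  assumes dilator: "po_dilator Wo Wm supp"
begin

lemma is_po_Wo: "is_po X \<Longrightarrow> is_po (Wo X)"
  using dilator[unfolded po_dilator_def] by (elim conjE; simp)

lemma emb_Wm: "is_po X \<Longrightarrow> is_po Y \<Longrightarrow> emb X Y f \<Longrightarrow> emb (Wo X) (Wo Y) (Wm X Y f)"
  using dilator[unfolded po_dilator_def] by (elim conjE; simp)

lemma supp_finite_subset:
  "is_po X \<Longrightarrow> \<sigma> \<in> Field (Wo X) \<Longrightarrow> finite (supp X \<sigma>) \<and> supp X \<sigma> \<subseteq> Field X"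
  using dilator[unfolded po_dilator_def] by (elim conjE; simp)

lemma supp_Wm:
  "is_po X \<Longrightarrow> is_po Y \<Longrightarrow> quasi_emb X Y f \<Longrightarrow> \<sigma> \<in> Field (Wo X)
    \<Longrightarrow> supp Y (Wm X Y f \<sigma>) = f ` supp X \<sigma>"
  using dilator[unfolded po_dilator_def] by (elim conjE; simp)

lemma range_Wm_emb:
  "is_po X \<Longrightarrow> is_po Y \<Longrightarrow> emb X Y f
    \<Longrightarrow> Wm X Y f ` Field (Wo X) = {\<sigma> \<in> Field (Wo Y). supp Y \<sigma> \<subseteq> f ` Field X}"
  using dilator[unfolded po_dilator_def] by (elim conjE; simp)

lemma supp_Wm_restr_id:
  assumes "is_po X" "a \<subseteq> Field X" "\<sigma>0 \<in> Field (Wo (restr X a))"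
  shows "supp X (Wm (restr X a) X id \<sigma>0) = supp (restr X a) \<sigma>0"
  using supp_Wm[OF is_po_restr[OF assms(1,2)] assms(1)
      emb_imp_quasi_emb[OF emb_restr_id[OF assms(1,2)]] assms(3)]
  by simp

lemma inj_on_Wm_restr_id:
  assumes "is_po X" "a \<subseteq> Field X"
  shows "inj_on (Wm (restr X a) X id) (Field (Wo (restr X a)))"
proof (rule emb_inj_on)
  show "is_po (Wo X)" using is_po_Wo[OF assms(1)] .
  show "antisym (Wo (restr X a))" using is_po_Wo[OF is_po_restr[OF assms]] unfolding is_po_def by blast
  show "emb (Wo (restr X a)) (Wo X) (Wm (restr X a) X id)"
    using emb_Wm[OF is_po_restr[OF assms] assms(1) emb_restr_id[OF assms]] .
qed

lemma normal_form_supp: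
  assumes "is_po X" "normal_form Wo Wm supp X \<sigma> a \<sigma>0"
  shows "a = supp X \<sigma>"
  using assms supp_Wm_restr_id unfolding normal_form_def by auto

lemma normal_form_exists:
  assumes X: "is_po X" and \<sigma>: "\<sigma> \<in> Field (Wo X)"
  shows "\<exists>\<sigma>0. normal_form Wo Wm supp X \<sigma> (supp X \<sigma>) \<sigma>0"
proof -
  let ?a = "supp X \<sigma>"
  have a: "finite ?a" "?a \<subseteq> Field X" using supp_finite_subset[OF X \<sigma>] by auto
  have "\<sigma> \<in> Wm (restr X ?a) X id ` Field (Wo (restr X ?a))"
    unfolding range_Wm_emb[OF is_po_restr[OF X a(2)] X emb_restr_id[OF X a(2)]]
    using \<sigma> by (simp add: Field_restr[OF X a(2)])
  then obtain \<sigma>0 where \<sigma>0: "\<sigma>0 \<in> Field (Wo (restr X ?a))" "\<sigma> = Wm (restr X ?a) X id \<sigma>0"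
    by blast
  have "supp (restr X ?a) \<sigma>0 = ?a"
    using supp_Wm_restr_id[OF X a(2) \<sigma>0(1)] \<sigma>0(2) by simp
  then show ?thesis using a \<sigma>0 unfolding normal_form_def by blast
qed

lemma normal_form_unique:
  assumes X: "is_po X"
    and a: "normal_form Wo Wm supp X \<sigma> a \<sigma>0" and b: "normal_form Wo Wm supp X \<sigma> b \<tau>0"
  shows "a = b \<and> \<sigma>0 = \<tau>0"
proof -
  have "a = b" using normal_form_supp[OF X a] normal_form_supp[OF X b] by simp
  moreover have "\<sigma>0 = \<tau>0"
  proof (rule inj_onD[OF inj_on_Wm_restr_id[OF X]])
    show "a \<subseteq> Field X" "\<sigma>0 \<in> Field (Wo (restr X a))"
      using a unfolding normal_form_def by auto
    show "Wm (restr X a) X id \<sigma>0 = Wm (restr X a) X id \<tau>0" "\<tau>0 \<in> Field (Wo (restr X a))"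
      using a b \<open>a = b\<close> unfolding normal_form_def by auto
  qed
  ultimately show ?thesis ..
qed

end

theorem lemma2p2:
  fixes Wo :: "'u rel \<Rightarrow> 'v rel"
    and Wm :: "'u rel \<Rightarrow> 'u rel \<Rightarrow> ('u \<Rightarrow> 'u) \<Rightarrow> 'v \<Rightarrow> 'v"
    and supp :: "'u rel \<Rightarrow> 'v \<Rightarrow> 'u set"
    and X :: "'u rel" and \<sigma> :: 'v
  assumes "po_dilator Wo Wm supp"
    and "is_po X"
    and "\<sigma> \<in> Field (Wo X)"
  shows "(\<exists>!p. finite (fst p) \<and> fst p \<subseteq> Field X \<and>
              snd p \<in> Field (Wo (restr X (fst p))) \<and>
              \<sigma> = Wm (restr X (fst p)) X id (snd p) \<and>
              supp (restr X (fst p)) (snd p) = fst p)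
       \<and> (\<forall>a \<sigma>0. finite a \<and> a \<subseteq> Field X \<and> \<sigma>0 \<in> Field (Wo (restr X a)) \<and>
              \<sigma> = Wm (restr X a) X id \<sigma>0 \<and> supp (restr X a) \<sigma>0 = a
              \<longrightarrow> a = supp X \<sigma>)"
proof -
  let ?NF = "normal_form Wo Wm supp X \<sigma>"
  obtain \<sigma>0 where "?NF (supp X \<sigma>) \<sigma>0"
    using normal_form_exists[OF assms] by blast
  moreover have "p = (supp X \<sigma>, \<sigma>0)" if "?NF (fst p) (snd p)" for p
    using normal_form_unique[OF assms(1,2) that \<open>?NF (supp X \<sigma>) \<sigma>0\<close>] by (simp add: prod_eq_iff)
  ultimately have "\<exists>!p. ?NF (fst p) (snd p)"
    by (intro ex1I[of _ "(supp X \<sigma>, \<sigma>0)"]) auto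
  moreover have "\<forall>a \<sigma>0. ?NF a \<sigma>0 \<longrightarrow> a = supp X \<sigma>"
    using normal_form_supp[OF assms(1,2)] by blast
  ultimately show ?thesis unfolding normal_form_def by (rule conjI)
qed

end
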